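(* For integers $k\ge2$ and real $u\ge k$, $$F_k(u)=\sum_{j=0}^{k-1}(-1)^{k-j-1}\,P_{k-j}(u-j)\,F_j(u).$$
   Context: The functions $P_k$ are defined by $P_0(u)=1$ for $u\ge 0$, and for integers $k\ge1$, $P_k:[k,\infty)\to\mathbb{R}$ is the function with $P_k(k)=0$ and $uP_k'(u)=P_{k-1}(u-1)$ for $u\ge k$. The functions $F_k$ are defined by $F_0(u)=1$ for $u\ge0$, and for integers $k\ge1$, $F_k:[k,\infty)\to\mathbb{R}$ is the function with $F_k(k)=0$ and $(u-k+1)F_k'(u)=F_{k-1}(u)$ for $u\ge k$. *)

theory Defs
  imports "HOL-Analysis.Analysis"
begin

text \<open>P_0 = 1; for k \<ge> 1, P_k is the solution on [k,\<infinity>) of P_k(k) = 0,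
  u P_k'(u) = P_{k-1}(u-1), i.e. P_k(u) = integral over [k,u] of P_{k-1}(t-1)/t.
  Values for u < k are irrelevant (the integral over an empty interval gives 0).\<close>
primrec P :: "nat \<Rightarrow> real \<Rightarrow> real" where
  "P 0 u = 1"
| "P (Suc k) u = integral {real (Suc k)..u} (\<lambda>t. P k (t - 1) / t)"

text \<open>F_0 = 1; for k \<ge> 1, F_k is the solution on [k,\<infinity>) of F_k(k) = 0,
  (u-k+1) F_k'(u) = F_{k-1}(u), i.e. F_k(u) = integral over [k,u] of F_{k-1}(t)/(t-k+1).\<close>
primrec F :: "nat \<Rightarrow> real \<Rightarrow> real" where
  "F 0 u = 1"
| "F (Suc k) u = integral {real (Suc k)..u} (\<lambda>t. F k t / (t - real (Suc k) + 1))"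

end

theory Submission
  imports Defs
begin

text \<open>Write \<open>G(t)\<close> for the right-hand side with \<open>u\<close> replaced by \<open>t\<close>. Every summand vanishes at
  \<open>t = k\<close>, because \<open>P (k - j)\<close> vanishes at \<open>k - j\<close>. Differentiating with \<open>t P_m'(t) = P_{m-1}(t-1)\<close>
  and \<open>(t - j + 1) F_j'(t) = F_{j-1}(t)\<close>, the contribution of \<open>P\<close>' in summand \<open>j\<close> cancels the
  contribution of \<open>F\<close>' in summand \<open>j + 1\<close>, and only \<open>F_{k-1}(t)/(t - k + 1) = F_k'(t)\<close> survives.
  Hence \<open>G\<close> and \<open>F_k\<close> agree at \<open>k\<close> and have the same derivative on \<open>[k, u]\<close>.\<close>

lemma has_real_derivative_integral_from:
  fixes f :: "real \<Rightarrow> real"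
  assumes "continuous_on {a..b} f" and "x \<in> {a..b}"
  shows "((\<lambda>u. integral {a..u} f) has_real_derivative f x) (at x within {a..b})"
  using integral_has_vector_derivative[OF assms]
  by (simp add: has_real_derivative_iff_has_vector_derivative)

lemma P_Suc_eq_integral:
  "P (Suc m) = (\<lambda>u. integral {real (Suc m)..u} (\<lambda>t. P m (t - 1) / t))"
  by (simp add: fun_eq_iff)

lemma F_0_eq_const: "F 0 = (\<lambda>_. 1)"
  by (simp add: fun_eq_iff)

lemma F_Suc_eq_integral:
  "F (Suc m) = (\<lambda>u. integral {real (Suc m)..u} (\<lambda>t. F m t / (t - real (Suc m) + 1)))"
  by (simp add: fun_eq_iff)

lemma continuous_on_P: "continuous_on {real m..B} (P m)"
proof (induction m arbitrary: B)
  case 0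
  then show ?case by simp
next
  case (Suc m)
  have "continuous_on {real (Suc m)..B} (\<lambda>t. P m (t - 1))"
    by (rule continuous_on_compose2[OF Suc.IH[of "B - 1"]]) (auto intro: continuous_intros)
  then have "continuous_on {real (Suc m)..B} (\<lambda>t. P m (t - 1) / t)"
    by (auto intro!: continuous_intros)
  then show ?case
    by (simp add: indefinite_integral_continuous_1 integrable_continuous_interval)
qed

lemma continuous_on_F: "continuous_on {real m..B} (F m)"
proof (induction m arbitrary: B)
  case 0
  then show ?case by simp
next
  case (Suc m)
  have "continuous_on {real (Suc m)..B} (F m)"
    by (rule continuous_on_subset[OF Suc.IH]) auto
  then have "continuous_on {real (Suc m)..B} (\<lambda>t. F m t / (t - real (Suc m) + 1))"
    by (auto intro!: continuous_intros)
  then show ?case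
    by (simp add: indefinite_integral_continuous_1 integrable_continuous_interval)
qed

lemma has_real_derivative_P_shifted:
  assumes "real (Suc m) + c \<le> x" and "x \<le> B"
  shows "((\<lambda>t. P (Suc m) (t - c)) has_real_derivative P m (x - c - 1) / (x - c))
           (at x within {real (Suc m) + c..B})"
proof -
  have "continuous_on {real (Suc m)..B - c} (\<lambda>t. P m (t - 1))"
    by (rule continuous_on_compose2[OF continuous_on_P[of m "B - c - 1"]])
       (auto intro: continuous_intros)
  then have "continuous_on {real (Suc m)..B - c} (\<lambda>t. P m (t - 1) / t)"
    by (auto intro!: continuous_intros)
  from has_real_derivative_integral_from[OF this, of "x - c"] assms
  have "(P (Suc m) has_real_derivative P m (x - c - 1) / (x - c))
          (at ((\<lambda>t. t - c) x) within (\<lambda>t. t - c) ` {real (Suc m) + c..B})"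
    by (simp add: P_Suc_eq_integral)
  from DERIV_image_chain[OF this DERIV_diff[OF DERIV_ident DERIV_const]]
  show ?thesis by (simp add: o_def)
qed

lemma has_real_derivative_F_Suc:
  assumes "real (Suc m) \<le> x" and "x \<le> B"
  shows "(F (Suc m) has_real_derivative F m x / (x - real (Suc m) + 1))
           (at x within {real (Suc m)..B})"
proof -
  have "continuous_on {real (Suc m)..B} (F m)"
    by (rule continuous_on_subset[OF continuous_on_F]) auto
  then have "continuous_on {real (Suc m)..B} (\<lambda>t. F m t / (t - real (Suc m) + 1))"
    by (auto intro!: continuous_intros)
  from has_real_derivative_integral_from[OF this] assms show ?thesis
    by (simp add: F_Suc_eq_integral)
qed

lemma sum_lessThan_Suc_cancelling_pairs:
  fixes A B :: "nat \<Rightarrow> 'a::ab_group_add"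
  assumes "B 0 = 0" and "\<And>j. j < n \<Longrightarrow> A j + B (Suc j) = 0"
  shows "(\<Sum>j<Suc n. A j + B j) = A n"
  using assms(2)
proof (induction n)
  case 0
  then show ?case using assms(1) by simp
next
  case (Suc n)
  then have "A n + B (Suc n) = 0" by simp
  with Suc show ?case by (simp add: algebra_simps)
qed

lemma has_real_derivative_alternating_sum:
  assumes t: "t \<in> {real (Suc n)..u}"
  shows "((\<lambda>t. \<Sum>j<Suc n. (-1) ^ (Suc n - j - 1) * P (Suc n - j) (t - real j) * F j t)
           has_real_derivative F n t / (t - real (Suc n) + 1)) (at t within {real (Suc n)..u})"
proof -
  define dF where "dF j = (if j = 0 then 0 else F (j - 1) t / (t - real j + 1))" for j
  define A where "A j = (-1) ^ (n - j) * (P (n - j) (t - real j - 1) / (t - real j) * F j t)" for j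
  define B where "B j = (-1) ^ (n - j) * (P (Suc n - j) (t - real j) * dF j)" for j
  have dP: "((\<lambda>t. P (Suc n - j) (t - real j)) has_real_derivative
              P (n - j) (t - real j - 1) / (t - real j)) (at t within {real (Suc n)..u})"
    if "j < Suc n" for j
    using has_real_derivative_P_shifted[of "n - j" "real j" t u] that t
    by (simp add: Suc_diff_le of_nat_diff)
  have dFj: "(F j has_real_derivative dF j) (at t within {real (Suc n)..u})"
    if "j < Suc n" for j
  proof (cases j)
    case 0
    then show ?thesis by (simp add: dF_def F_0_eq_const)
  next
    case (Suc i)
    have "(F (Suc i) has_real_derivative dF j) (at t within {real (Suc i)..u})"
      using has_real_derivative_F_Suc[of i t u] t that Suc by (simp add: dF_def)
    moreover have "{real (Suc n)..u} \<subseteq> {real (Suc i)..u}"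
      using that Suc by auto
    ultimately show ?thesis
      using Suc by (blast intro: DERIV_subset)
  qed
  have D: "((\<lambda>t. \<Sum>j<Suc n. (-1) ^ (Suc n - j - 1) * P (Suc n - j) (t - real j) * F j t)
             has_real_derivative (\<Sum>j<Suc n. A j + B j)) (at t within {real (Suc n)..u})"
  proof (rule DERIV_sum)
    fix j assume "j \<in> {..<Suc n}"
    then have "((\<lambda>t. (-1) ^ (n - j) * (P (Suc n - j) (t - real j) * F j t)) has_real_derivative
                 (-1) ^ (n - j) * (P (Suc n - j) (t - real j) * dF j
                                  + P (n - j) (t - real j - 1) / (t - real j) * F j t))
                 (at t within {real (Suc n)..u})"
      by (intro DERIV_cmult DERIV_mult' dP dFj) simp_all
    moreover have "(-1) ^ (n - j) * (P (Suc n - j) (t - real j) * dF j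
                                  + P (n - j) (t - real j - 1) / (t - real j) * F j t) = A j + B j"
      by (simp add: A_def B_def distrib_left)
    moreover have "Suc n - j - 1 = n - j"
      by simp
    ultimately show "((\<lambda>t. (-1) ^ (Suc n - j - 1) * P (Suc n - j) (t - real j) * F j t)
                 has_real_derivative A j + B j) (at t within {real (Suc n)..u})"
      by (simp only: mult.assoc)
  qed
  have "A j + B (Suc j) = 0" if "j < n" for j
  proof -
    define d where "d = n - Suc j"
    have d: "n - j = Suc d"
      using Suc_diff_Suc[OF that] by (simp add: d_def)
    have "A j = - ((-1) ^ d * (P (Suc d) (t - real j - 1) / (t - real j) * F j t))"
      unfolding A_def d by simp
    moreover have "B (Suc j) = (-1) ^ d * (P (Suc d) (t - real j - 1) * (F j t / (t - real j)))"
      using d by (simp add: B_def dF_def diff_diff_eq add.commute flip: d_def del: P.simps)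
    ultimately show ?thesis
      by simp
  qed
  then have "(\<Sum>j<Suc n. A j + B j) = A n"
    by (intro sum_lessThan_Suc_cancelling_pairs) (simp_all add: B_def dF_def)
  also have "A n = F n t / (t - real (Suc n) + 1)"
    by (simp add: A_def)
  finally show ?thesis using D by simp
qed

lemma alternating_sum_at_left_end:
  "(\<Sum>j<Suc n. (-1) ^ (Suc n - j - 1) * P (Suc n - j) (real (Suc n) - real j) * F j (real (Suc n))) = 0"
proof (intro sum.neutral ballI)
  fix j assume "j \<in> {..<Suc n}"
  then have m: "Suc n - j = Suc (n - j)" and "real (Suc n) - real j = real (Suc (n - j))"
    by (simp_all add: of_nat_diff Suc_diff_le)
  moreover have "P (Suc (n - j)) (real (Suc (n - j))) = 0"
    by simp
  ultimately show "(-1) ^ (Suc n - j - 1) * P (Suc n - j) (real (Suc n) - real j) * F j (real (Suc n)) = 0"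
    by (simp only: m)
qed

lemma F_Suc_eq_alternating_sum:
  assumes u: "real (Suc n) \<le> u"
  shows "F (Suc n) u = (\<Sum>j<Suc n. (-1) ^ (Suc n - j - 1) * P (Suc n - j) (u - real j) * F j u)"
proof -
  define G where "G t = (\<Sum>j<Suc n. (-1) ^ (Suc n - j - 1) * P (Suc n - j) (t - real j) * F j t)" for t
  have "((\<lambda>t. F n t / (t - real (Suc n) + 1)) has_integral G u - G (real (Suc n))) {real (Suc n)..u}"
    using has_real_derivative_alternating_sum
    by (intro fundamental_theorem_of_calculus[OF u])
       (simp add: G_def has_real_derivative_iff_has_vector_derivative[symmetric])
  moreover have "G (real (Suc n)) = 0"
    unfolding G_def by (rule alternating_sum_at_left_end)
  ultimately have "F (Suc n) u = G u"
    by (simp add: integral_unique)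
  then show ?thesis by (simp add: G_def)
qed

theorem mainTheorem11:
  fixes k :: nat and u :: real
  assumes "k \<ge> 2" and "u \<ge> real k"
  shows "F k u = (\<Sum>j<k. (-1) ^ (k - j - 1) * P (k - j) (u - real j) * F j u)"
proof -
  obtain n where "k = Suc n" using assms(1) by (cases k) auto
  then show ?thesis using F_Suc_eq_alternating_sum[of n u] assms(2) by simp
qed

end
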